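(* Let $\varphi(z)=\frac{e^z-1}{z}$ for $z\neq 0$ and $\varphi(0)=1$. Let $\zeta<0$ and $\eta>0$ with $\eta\geq 2/|\zeta|$. Then for all $\lambda\leq 0$, $$\varphi(\eta\lambda)(\lambda+\zeta)\Bigl(1-\frac{\eta\lambda}{2}\varphi(\eta\lambda)\Bigr)\in\Bigl[\tfrac{3}{2}\zeta,\,0\Bigr].$$
   Context: The quantity $\varphi(\eta\lambda)(\lambda+\zeta)(1-\frac{\eta\lambda}{2}\varphi(\eta\lambda))$ is the coefficient of the "second-order averaged force" $f_{\eta,2}$ when the splitting $f_F(y)=\lambda y$, $f_S(y)=\zeta y$ is used. *)

theory Defs
  imports Complex_Main
begin

definition phi :: "real \<Rightarrow> real" where
  "phi z = (if z = 0 then 1 else (exp z - 1) / z)"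

end

theory Submission
  imports Defs
begin

text \<open>
  Write \<open>x = \<eta>\<lambda> \<le> 0\<close>. Since \<open>x \<phi>(x) = e\<^sup>x - 1\<close>, the second factor is \<open>(3 - e\<^sup>x)/2\<close>, so the
  quantity is \<open>\<phi>(x) (3 - e\<^sup>x)/2\<close> times \<open>\<lambda> + \<zeta> < 0\<close>: it is nonpositive. The hypothesis
  \<open>\<eta> |\<zeta>| \<ge> 2\<close> gives \<open>|\<lambda> + \<zeta>| \<le> |\<zeta>| (2 - x)/2\<close>, which reduces the lower bound to the
  one-variable inequality \<open>\<phi>(x) (3 - e\<^sup>x) (2 - x) \<le> 6\<close> for \<open>x \<le> 0\<close>. For \<open>x \<le> -2\<close> it is
  crude; for \<open>-2 < x \<le> 0\<close> the Pade bound \<open>e\<^sup>x (2 - x) \<ge> 2 + x\<close> bounds \<open>(1 - e\<^sup>x)(2 - x)\<close> by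
  \<open>-2x\<close> and \<open>(3 - e\<^sup>x)(2 - x)\<close> by \<open>4(1 - x)\<close>, and \<open>-8x(1 - x) \<le> -6x(2 - x)\<close> there.
\<close>

lemma mult_phi: "x * phi x = exp x - 1"
  by (simp add: phi_def)

lemma one_minus_half_mult_phi: "1 - x / 2 * phi x = (3 - exp x) / 2"
  using mult_phi[of x] by (simp add: field_simps)

lemma phi_pos: "0 < phi x"
proof (cases x "0::real" rule: linorder_cases)
  case less
  then show ?thesis by (simp add: phi_def divide_neg_neg)
next
  case greater
  then show ?thesis by (simp add: phi_def)
qed (simp add: phi_def)

lemma exp_ge_pade_nonpos:
  fixes x :: real
  assumes "x \<le> 0"
  shows "2 + x \<le> exp x * (2 - x)"
proof -
  let ?f = "\<lambda>s::real. exp s * (2 - s) - 2 - s"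
  have "?f 0 \<le> ?f x"
  proof (rule DERIV_nonpos_imp_nonincreasing[OF assms])
    fix s :: real
    assume "x \<le> s" "s \<le> 0"
    have "exp s * (1 - s) \<le> exp s * exp (- s)"
      using exp_ge_add_one_self[of "- s"] by (intro mult_left_mono) auto
    then have "exp s * (1 - s) - 1 \<le> 0"
      by (simp add: exp_minus)
    moreover have "DERIV ?f s :> exp s * (1 - s) - 1"
      by (auto intro!: derivative_eq_intros simp: algebra_simps)
    ultimately show "\<exists>y. DERIV ?f s :> y \<and> y \<le> 0"
      by blast
  qed
  then show ?thesis by simp
qed

lemma one_minus_exp_mult_three_minus_exp_le:
  fixes x :: real
  assumes "x \<le> 0"
  shows "(1 - exp x) * (3 - exp x) * (2 - x) \<le> - 6 * x"
proof -
  define u where "u = exp x"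
  have "0 < u" "u \<le> 1"
    using assms by (simp_all add: u_def)
  have "(1 - u) * (3 - u) * (2 - x) \<le> - 6 * x"
  proof (cases "x \<le> -2")
    case True
    have "u * u \<le> u"
      using \<open>0 < u\<close> \<open>u \<le> 1\<close> by (simp add: mult_left_le)
    then have "(1 - u) * (3 - u) \<le> 3"
      using \<open>0 < u\<close> by (simp add: algebra_simps)
    then have "(1 - u) * (3 - u) * (2 - x) \<le> 3 * (2 - x)"
      using assms by (intro mult_right_mono) auto
    also have "\<dots> \<le> - 6 * x"
      using True by simp
    finally show ?thesis .
  next
    case False
    have pade: "2 + x \<le> u * (2 - x)"
      using exp_ge_pade_nonpos[OF assms] by (simp add: u_def)
    have "(1 - u) * (2 - x) \<le> - 2 * x"
      using pade by (simp add: algebra_simps)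
    moreover have "(3 - u) * (2 - x) \<le> 4 * (1 - x)"
      using pade by (simp add: algebra_simps)
    moreover have "0 \<le> - 2 * x" "0 \<le> (3 - u) * (2 - x)"
      using assms \<open>u \<le> 1\<close> by simp_all
    ultimately have "(1 - u) * (2 - x) * ((3 - u) * (2 - x)) \<le> - 2 * x * (4 * (1 - x))"
      by (rule mult_mono)
    also have "\<dots> \<le> - 6 * x * (2 - x)"
      using mult_nonpos_nonneg[of x "x + 2"] assms False by (simp add: algebra_simps)
    finally have "(1 - u) * (3 - u) * (2 - x) * (2 - x) \<le> - 6 * x * (2 - x)"
      by (simp add: ac_simps)
    then show ?thesis
      by (rule mult_right_le_imp_le) (use assms in simp)
  qed
  then show ?thesis by (simp add: u_def)
qed

lemma phi_mult_three_minus_exp_le: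
  fixes x :: real
  assumes "x \<le> 0"
  shows "phi x * (3 - exp x) * (2 - x) \<le> 6"
proof (cases "x = 0")
  case False
  with assms have "x < 0" by simp
  have "phi x * (3 - exp x) * (2 - x) = (1 - exp x) * (3 - exp x) * (2 - x) / (- x)"
    using \<open>x < 0\<close> by (simp add: phi_def field_simps)
  also have "\<dots> \<le> 6"
    using one_minus_exp_mult_three_minus_exp_le[OF assms] \<open>x < 0\<close>
    by (subst pos_divide_le_eq) simp_all
  finally show ?thesis .
qed (simp add: phi_def)

theorem theorem2p2:
  fixes zeta eta lam :: real
  assumes "zeta < 0" and "eta > 0" and "eta \<ge> 2 / \<bar>zeta\<bar>" and "lam \<le> 0"
  shows "phi (eta * lam) * (lam + zeta) * (1 - eta * lam / 2 * phi (eta * lam))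
           \<in> {3 / 2 * zeta .. 0}"
proof -
  define x where "x = eta * lam"
  define c where "c = phi x * (3 - exp x) / 2"
  have x_nonpos: "x \<le> 0"
    using assms(2,4) by (simp add: x_def mult_nonneg_nonpos)
  have expr: "phi x * (lam + zeta) * (1 - x / 2 * phi x) = c * (lam + zeta)"
    by (subst one_minus_half_mult_phi) (simp add: c_def)
  have "0 < c"
  proof -
    have "exp x < 3"
      using exp_le_one_iff[of x] x_nonpos by linarith
    then show ?thesis
      using phi_pos[of x] by (simp add: c_def)
  qed
  have "2 \<le> eta * (- zeta)"
    using assms(1,3) by (subst (asm) pos_divide_le_eq) auto
  then have "- lam * 2 \<le> - lam * (eta * (- zeta))"
    using assms(4) by (intro mult_left_mono) auto
  then have "- (lam + zeta) \<le> - zeta * (2 - x) / 2"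
    by (simp add: x_def algebra_simps)
  then have "c * (- (lam + zeta)) \<le> c * (- zeta * (2 - x) / 2)"
    using \<open>0 < c\<close> by (intro mult_left_mono) auto
  also have "\<dots> = phi x * (3 - exp x) * (2 - x) * (- zeta) / 4"
    by (simp add: c_def)
  also have "\<dots> \<le> 6 * (- zeta) / 4"
    using phi_mult_three_minus_exp_le[OF x_nonpos] assms(1)
    by (intro divide_right_mono mult_right_mono) auto
  finally have "3 / 2 * zeta \<le> c * (lam + zeta)"
    by (simp add: algebra_simps)
  moreover have "c * (lam + zeta) \<le> 0"
    using \<open>0 < c\<close> assms(1,4) by (intro mult_nonneg_nonpos) auto
  ultimately show ?thesis
    unfolding x_def[symmetric] expr by simp
qed

end
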